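(* Let $C_0>0$. There exist $\delta>0$ and $C>0$ such that for every $n\in\mathbb Z\setminus\{0\}$ and every dyadic number $M\ge1$, the Lebesgue measure of the set $$\{\mu\in\mathbb R:\ M/2\le|\mu|\le2M,\ \exists\, n_1,n_2\in\mathbb Z\setminus\{0\}\text{ with } n_1+n_2=n \text{ and } |\mu+3nn_1n_2|\le C_0\langle nn_1n_2\rangle^{1/100}\}$$ is at most $CM^{1-\delta}$.
   Context: $\langle x\rangle=1+|x|$. A dyadic number is one of the form $2^j$, $j\in\mathbb Z_{\ge0}$. *)

theory Defs
  imports "HOL-Analysis.Analysis"
begin

definition jbr :: "real \<Rightarrow> real" where
  "jbr x = 1 + \<bar>x\<bar>"

definition exc_set :: "real \<Rightarrow> int \<Rightarrow> real \<Rightarrow> real set" where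
  "exc_set C0 n M = {\<mu>::real. M / 2 \<le> \<bar>\<mu>\<bar> \<and> \<bar>\<mu>\<bar> \<le> 2 * M \<and>
     (\<exists>n1 n2 :: int. n1 \<noteq> 0 \<and> n2 \<noteq> 0 \<and> n1 + n2 = n \<and>
        \<bar>\<mu> + 3 * real_of_int (n * n1 * n2)\<bar> \<le> C0 * jbr (real_of_int (n * n1 * n2)) powr (1/100))}"

end

theory Submission
  imports Defs
begin

text \<open>If \<open>\<mu>\<close> lies in the exceptional set, then \<open>|\<mu>| \<le> 2M\<close> forces \<open>|n n1 n2| = O(M)\<close>
  (the error term with exponent 1/100 is absorbed by AM-GM), and since \<open>n \<noteq> 0\<close> this gives
  \<open>min |n1| |n2| = O(M^(1/2))\<close>. The centre \<open>-3 n n1 n2\<close> is determined by either of \<open>n1\<close>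
  and \<open>n2 = n - n1\<close>, so \<open>\<mu>\<close> lies in one of \<open>O(M^(1/2))\<close> intervals of length \<open>O(M^(1/100))\<close>.
  Hence the measure is \<open>O(M^(51/100))\<close>, i.e. \<open>\<delta> = 49/100\<close> works.\<close>

lemma le_of_le_add_mult_powr:
  fixes a b c p :: real
  assumes "a \<ge> 0" "c \<ge> 0" "p \<le> 1/2"
    and "a \<le> b + c * (1 + a) powr p"
  shows "a \<le> 2 * b + c^2 + 1"
proof -
  have "(1 + a) powr p \<le> (1 + a) powr (1/2)"
    using assms by (intro powr_mono) auto
  also have "\<dots> = sqrt (1 + a)"
    using assms by (simp add: powr_half_sqrt)
  finally have "c * (1 + a) powr p \<le> sqrt (c^2 * (1 + a))"
    using assms by (simp add: real_sqrt_mult mult_left_mono)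
  also have "\<dots> \<le> (c^2 + (1 + a)) / 2"
    using assms by (intro arith_geo_mean_sqrt) auto
  finally show ?thesis
    using assms by argo
qed

lemma min_abs_le_floor_sqrt:
  fixes x y :: int and A :: real
  assumes "of_int (\<bar>x\<bar> * \<bar>y\<bar>) \<le> A"
  shows "min \<bar>x\<bar> \<bar>y\<bar> \<le> \<lfloor>sqrt A\<rfloor>"
proof -
  have "(min \<bar>x\<bar> \<bar>y\<bar>)^2 \<le> \<bar>x\<bar> * \<bar>y\<bar>"
    by (simp add: power2_eq_square min_def mult_mono)
  then have "of_int ((min \<bar>x\<bar> \<bar>y\<bar>)^2) \<le> A"
    using assms by (meson of_int_le_iff order_trans)
  then have "of_int (min \<bar>x\<bar> \<bar>y\<bar>) \<le> sqrt A"
    by (simp add: real_le_rsqrt)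
  then show ?thesis
    by linarith
qed

lemma two_floor_sqrt_add_one_le:
  fixes x :: real
  assumes "x \<ge> 1"
  shows "2 * of_int \<lfloor>sqrt x\<rfloor> + 1 \<le> 3 * sqrt x"
  using assms of_int_floor_le[of "sqrt x"] real_sqrt_ge_one[of x] by linarith

lemma emeasure_UN_cball_le:
  fixes c :: "'i \<Rightarrow> real"
  assumes "finite I" "r \<ge> 0"
  shows "emeasure lebesgue (\<Union>i\<in>I. cball (c i) r) \<le> ennreal (2 * r * card I)"
proof -
  have "emeasure lebesgue (\<Union>i\<in>I. cball (c i) r) \<le> (\<Sum>i\<in>I. emeasure lebesgue (cball (c i) r))"
    using assms by (intro emeasure_subadditive_finite) auto
  also have "\<dots> = (\<Sum>i\<in>I. ennreal (2 * r))"
    using assms by (simp add: cball_eq_atLeastAtMost)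
  also have "\<dots> = ennreal (2 * r * card I)"
    by (simp add: ennreal_mult' ennreal_of_nat_eq_real_of_nat mult.commute)
  finally show ?thesis .
qed

lemma near_resonant_jbr_le:
  fixes C0 M \<mu> N :: real
  assumes "C0 \<ge> 0" "M \<ge> 1" "\<bar>\<mu>\<bar> \<le> 2 * M"
    and "\<bar>\<mu> + 3 * N\<bar> \<le> C0 * jbr N powr (1/100)"
  shows "jbr N \<le> (C0^2 + 6) * M"
proof -
  have "\<bar>N\<bar> \<le> 2 * M + C0 * (1 + \<bar>N\<bar>) powr (1/100)"
    using assms unfolding jbr_def by linarith
  then have "\<bar>N\<bar> \<le> 2 * (2 * M) + C0^2 + 1"
    using assms by (intro le_of_le_add_mult_powr) auto
  moreover have "C0^2 + 2 \<le> (C0^2 + 2) * M"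
    using assms mult_left_mono[of 1 M "C0^2 + 2"] by simp
  ultimately show ?thesis
    unfolding jbr_def by (simp add: algebra_simps)
qed

lemma exc_set_subset_UN_cball:
  fixes C0 M K :: real and n :: int
  assumes "C0 \<ge> 0" "M \<ge> 1" "n \<noteq> 0" "C0^2 + 6 \<le> K"
  shows "exc_set C0 n M \<subseteq> (\<Union>m\<in>{-\<lfloor>sqrt (K * M)\<rfloor>..\<lfloor>sqrt (K * M)\<rfloor>}.
           cball (-3 * real_of_int (n * m * (n - m))) (C0 * (K * M) powr (1/100)))"
proof
  fix \<mu> assume "\<mu> \<in> exc_set C0 n M"
  then obtain n1 n2 :: int where "\<bar>\<mu>\<bar> \<le> 2 * M" "n1 + n2 = n"
    and near: "\<bar>\<mu> + 3 * of_int (n * n1 * n2)\<bar> \<le> C0 * jbr (of_int (n * n1 * n2)) powr (1/100)"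
    unfolding exc_set_def by blast
  have "jbr (of_int (n * n1 * n2)) \<le> (C0^2 + 6) * M"
    using near_resonant_jbr_le[OF assms(1,2)] \<open>\<bar>\<mu>\<bar> \<le> 2 * M\<close> near by blast
  also have "\<dots> \<le> K * M"
    using assms by simp
  finally have jbr_le: "jbr (of_int (n * n1 * n2)) \<le> K * M" .
  have "\<bar>n1\<bar> * \<bar>n2\<bar> \<le> \<bar>n * n1 * n2\<bar>"
    using \<open>n \<noteq> 0\<close> mult_right_mono[of 1 "\<bar>n\<bar>" "\<bar>n1\<bar> * \<bar>n2\<bar>"]
    by (simp add: abs_mult mult.assoc)
  then have "of_int (\<bar>n1\<bar> * \<bar>n2\<bar>) \<le> K * M"
    using jbr_le unfolding jbr_def by linarith
  then have min_le: "min \<bar>n1\<bar> \<bar>n2\<bar> \<le> \<lfloor>sqrt (K * M)\<rfloor>"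
    by (rule min_abs_le_floor_sqrt)
  \<comment> \<open>the centre is symmetric in \<open>n1\<close> and \<open>n2 = n - n1\<close>, so index it by the smaller one\<close>
  obtain m where "\<bar>m\<bar> \<le> \<lfloor>sqrt (K * M)\<rfloor>" and center: "n * n1 * n2 = n * m * (n - m)"
    using min_le \<open>n1 + n2 = n\<close>
    by (cases "\<bar>n1\<bar> \<le> \<bar>n2\<bar>") (auto intro!: that[of n1] that[of n2])
  have "jbr (of_int (n * n1 * n2)) powr (1/100) \<le> (K * M) powr (1/100)"
    using jbr_le by (intro powr_mono2) (auto simp: jbr_def)
  then have "dist (-3 * real_of_int (n * m * (n - m))) \<mu> \<le> C0 * (K * M) powr (1/100)"
    using near mult_left_mono[OF _ \<open>C0 \<ge> 0\<close>] unfolding dist_real_def center by fastforce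
  with \<open>\<bar>m\<bar> \<le> \<lfloor>sqrt (K * M)\<rfloor>\<close>
  show "\<mu> \<in> (\<Union>m\<in>{-\<lfloor>sqrt (K * M)\<rfloor>..\<lfloor>sqrt (K * M)\<rfloor>}.
           cball (-3 * real_of_int (n * m * (n - m))) (C0 * (K * M) powr (1/100)))"
    by (intro UN_I[of m]) auto
qed

lemma emeasure_exc_set_le:
  fixes C0 M :: real and n :: int
  assumes "C0 \<ge> 0" "M \<ge> 1" "n \<noteq> 0"
  shows "emeasure lebesgue (exc_set C0 n M) \<le> ennreal (6 * C0 * (C0^2 + 6) * M powr (51/100))"
proof -
  define K where "K = C0^2 + 6"
  define L where "L = \<lfloor>sqrt (K * M)\<rfloor>"
  define R where "R = C0 * (K * M) powr (1/100)"
  have "K \<ge> 1" "K * M \<ge> 1"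
    using assms mult_mono[of 1 K 1 M] unfolding K_def by auto
  have "emeasure lebesgue (exc_set C0 n M)
      \<le> emeasure lebesgue (\<Union>m\<in>{-L..L}. cball (-3 * real_of_int (n * m * (n - m))) R)"
    using exc_set_subset_UN_cball[OF assms, of K] unfolding K_def L_def R_def
    by (intro emeasure_mono) auto
  also have "\<dots> \<le> ennreal (2 * R * card {-L..L})"
    using assms unfolding R_def by (intro emeasure_UN_cball_le) auto
  also have "\<dots> \<le> ennreal (6 * C0 * K * M powr (51/100))"
  proof (rule ennreal_leI)
    have "real (card {-L..L}) = 2 * of_int L + 1"
      using \<open>K * M \<ge> 1\<close> unfolding L_def by simp
    also have "\<dots> \<le> 3 * (K * M) powr (1/2)"
      using two_floor_sqrt_add_one_le[OF \<open>K * M \<ge> 1\<close>] \<open>K * M \<ge> 1\<close>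
      unfolding L_def by (simp add: powr_half_sqrt)
    finally have "2 * R * card {-L..L} \<le> 2 * R * (3 * (K * M) powr (1/2))"
      using assms unfolding R_def by (intro mult_left_mono) auto
    also have "\<dots> = 6 * C0 * ((K * M) powr (1/100) * (K * M) powr (1/2))"
      unfolding R_def by simp
    also have "\<dots> = 6 * C0 * (K * M) powr (51/100)"
      by (simp add: powr_add[symmetric])
    also have "\<dots> = 6 * C0 * (K powr (51/100) * M powr (51/100))"
      using \<open>K \<ge> 1\<close> assms by (simp add: powr_mult)
    also have "\<dots> \<le> 6 * C0 * (K * M powr (51/100))"
      using \<open>K \<ge> 1\<close> assms powr_mono[of "51/100" 1 K] by (intro mult_left_mono mult_right_mono) auto
    finally show "2 * R * card {-L..L} \<le> 6 * C0 * K * M powr (51/100)"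
      by (simp add: mult.assoc)
  qed
  finally show ?thesis
    unfolding K_def .
qed

theorem lemmaA1:
  fixes C0 :: real
  assumes "C0 > 0"
  shows "\<exists>\<delta>>0. \<exists>C>0. \<forall>n::int. \<forall>j::nat. n \<noteq> 0 \<longrightarrow>
           emeasure lebesgue (exc_set C0 n (2 ^ j)) \<le> ennreal (C * (2 ^ j) powr (1 - \<delta>))"
proof (intro exI conjI allI impI)
  fix n :: int and j :: nat
  assume "n \<noteq> 0"
  then show "emeasure lebesgue (exc_set C0 n (2 ^ j))
      \<le> ennreal (6 * C0 * (C0^2 + 6) * (2 ^ j) powr (1 - 49/100))"
    using emeasure_exc_set_le[of C0 "2 ^ j" n] assms by simp
qed (use assms in \<open>auto intro!: mult_pos_pos add_nonneg_pos\<close>)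

end
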